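(* Let $n=2^r$ and $m>n$. Let $\mathcal R'$ be the random restriction on the variables of the binary $\mathrm{PHP}^m_n$ which, for each pigeon $i$ independently, selects a bit position $j\in[r]$ uniformly at random and sets $P_{i,j}$ to $0$ or $1$ with probability $\frac12$ each. Then the probability (over $\mathcal R'$) that some Sherali–Adams refutation of the binary $\mathrm{PHP}^m_n$ restricted by $\mathcal R'$ contains no term mentioning at least $\frac{n}{2\log_2 n}$ pigeons is at most $e^{-n/(32\log_2^2 n)}$.
   Context: Binary Pigeonhole Principle $\mathrm{PHP}^m_n$ ($n=2^r$): pigeons $[m]$, holes $[n]$ with distinct $r$-bit representations $a_1\dots a_r$; variables $P_{i,j}$ ($i\in[m]$, $j\in[r]$), the $j$th bit of pigeon $i$'s hole; $X^1=X$, $X^0=\neg X$. Clauses: for every hole $a$ and pigeons $i\ne i'$, $\bigvee_j P_{i,j}^{1-a_j}\vee\bigvee_j P_{i',j}^{1-a_j}$. The restricted formula is obtained by substituting the values fixed by $\mathcal R'$. Sherali–Adams (SA): for every conjunction $D$ of literals (as a set; $\emptyset$ empty) there is a real variable (term) $Z_D$, $Z_\emptyset=1$. Lifts by $D$: of a clause $l_1\vee\dots\vee l_t$, $Z_{l_1\wedge D}+\dots+Z_{l_t\wedge D}\ge Z_D$; of negation equalities, $Z_{v\wedge D}+Z_{\neg v\wedge D}=Z_D$; of bounds, $0\le Z_{l\wedge D}\le Z_D$. An SA refutation is a set of lifted constraints with empty common real solution set; it contains the terms occurring in its constraints. A term $Z_D$ mentions pigeon $i$ if $D$ contains a literal of some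 $P_{i,j}$. *)

theory Defs
  imports Complex_Main "HOL-Library.FuncSet"
begin

text \<open>Variables of the binary PHP: (i, j) stands for P_{i,j}, pigeon i < m, bit j < r
  (0-indexed). A literal is a variable with a polarity: (v, True) = v, (v, False) = not v.
  A conjunction D of literals is a (finite) set of literals; Z_D is Z D.\<close>

type_synonym var = "nat \<times> nat"
type_synonym lit = "var \<times> bool"

definition hole_bit :: "nat \<Rightarrow> nat \<Rightarrow> bool" where
  "hole_bit a j = odd (a div 2 ^ j)"

definition php_clause :: "nat \<Rightarrow> nat \<Rightarrow> nat \<Rightarrow> nat \<Rightarrow> lit set" where
  "php_clause r a i i' =
     {((i, j), \<not> hole_bit a j) | j. j < r} \<union> {((i', j), \<not> hole_bit a j) | j. j < r}"

definition php_clauses :: "nat \<Rightarrow> nat \<Rightarrow> lit set set" where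
  "php_clauses m r = {php_clause r a i i' | a i i'. a < 2 ^ r \<and> i < m \<and> i' < m \<and> i \<noteq> i'}"

text \<open>A restriction from R': for each pigeon i, rho i = (j, b): bit position j < r is set to b.
  The sample space is all such choices; R' is the uniform distribution on it.\<close>
definition restrictions :: "nat \<Rightarrow> nat \<Rightarrow> (nat \<Rightarrow> nat \<times> bool) set" where
  "restrictions m r = {..<m} \<rightarrow>\<^sub>E ({..<r} \<times> (UNIV :: bool set))"

definition is_fixed :: "(nat \<Rightarrow> nat \<times> bool) \<Rightarrow> var \<Rightarrow> bool" where
  "is_fixed \<rho> v = (fst (\<rho> (fst v)) = snd v)"

definition lit_true :: "(nat \<Rightarrow> nat \<times> bool) \<Rightarrow> lit \<Rightarrow> bool" where
  "lit_true \<rho> l = (is_fixed \<rho> (fst l) \<and> snd (\<rho> (fst (fst l))) = snd l)"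

definition restr_vars :: "nat \<Rightarrow> nat \<Rightarrow> (nat \<Rightarrow> nat \<times> bool) \<Rightarrow> var set" where
  "restr_vars m r \<rho> = {(i, j). i < m \<and> j < r \<and> \<not> is_fixed \<rho> (i, j)}"

definition restr_clauses :: "nat \<Rightarrow> nat \<Rightarrow> (nat \<Rightarrow> nat \<times> bool) \<Rightarrow> lit set set" where
  "restr_clauses m r \<rho> =
     {{l \<in> C. \<not> is_fixed \<rho> (fst l)} | C. C \<in> php_clauses m r \<and> \<not> (\<exists>l\<in>C. lit_true \<rho> l)}"

datatype sa_constr =
    Clause_lift "lit set" "lit set"
  | Neg_lift var "lit set"
  | Lower_lift lit "lit set"
  | Upper_lift lit "lit set"

fun sa_holds :: "(lit set \<Rightarrow> real) \<Rightarrow> sa_constr \<Rightarrow> bool" where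
  "sa_holds Z (Clause_lift C D) = ((\<Sum>l\<in>C. Z (insert l D)) \<ge> Z D)"
| "sa_holds Z (Neg_lift v D) = (Z (insert (v, True) D) + Z (insert (v, False) D) = Z D)"
| "sa_holds Z (Lower_lift l D) = (0 \<le> Z (insert l D))"
| "sa_holds Z (Upper_lift l D) = (Z (insert l D) \<le> Z D)"

fun sa_terms :: "sa_constr \<Rightarrow> lit set set" where
  "sa_terms (Clause_lift C D) = insert D ((\<lambda>l. insert l D) ` C)"
| "sa_terms (Neg_lift v D) = {insert (v, True) D, insert (v, False) D, D}"
| "sa_terms (Lower_lift l D) = {insert l D}"
| "sa_terms (Upper_lift l D) = {insert l D, D}"

definition conj_ok :: "var set \<Rightarrow> lit set \<Rightarrow> bool" where
  "conj_ok V D = (finite D \<and> (\<forall>l\<in>D. fst l \<in> V))"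

fun sa_valid :: "nat \<Rightarrow> nat \<Rightarrow> (nat \<Rightarrow> nat \<times> bool) \<Rightarrow> sa_constr \<Rightarrow> bool" where
  "sa_valid m r \<rho> (Clause_lift C D) = (C \<in> restr_clauses m r \<rho> \<and> conj_ok (restr_vars m r \<rho>) D)"
| "sa_valid m r \<rho> (Neg_lift v D) = (v \<in> restr_vars m r \<rho> \<and> conj_ok (restr_vars m r \<rho>) D)"
| "sa_valid m r \<rho> (Lower_lift l D) = (fst l \<in> restr_vars m r \<rho> \<and> conj_ok (restr_vars m r \<rho>) D)"
| "sa_valid m r \<rho> (Upper_lift l D) = (fst l \<in> restr_vars m r \<rho> \<and> conj_ok (restr_vars m r \<rho>) D)"

definition sa_refutation :: "nat \<Rightarrow> nat \<Rightarrow> (nat \<Rightarrow> nat \<times> bool) \<Rightarrow> sa_constr set \<Rightarrow> bool" where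
  "sa_refutation m r \<rho> S =
     (finite S \<and> (\<forall>c\<in>S. sa_valid m r \<rho> c) \<and>
      \<not> (\<exists>Z :: lit set \<Rightarrow> real. Z {} = 1 \<and> (\<forall>c\<in>S. sa_holds Z c)))"

definition pigeons_of :: "lit set \<Rightarrow> nat set" where
  "pigeons_of D = {i. \<exists>j b. ((i, j), b) \<in> D}"

end

theory Submission
  imports Defs
begin

(* The probability is in fact 0: for every restriction \<rho>, no SA refutation of the restricted
   formula has all its terms narrow.

   Send pigeon i to a hole x i < 2^(r-1), or to the bitwise complement of x i when x i
   disagrees with the bit fixed by \<rho>.  The top bit of the hole records which of the two
   happened, so distinct x i give distinct holes, and every fixed literal of \<rho> is respected.
   Let Z_D be the probability that D holds when the pigeons mentioned by D are placed by a
   uniformly random injection x into {..<2^(r-1)}.  Restricting a uniform injection to a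
   subset of the pigeons gives a uniform injection, as long as there are at most 2^(r-1)
   pigeons; so all terms of one lifted constraint may be evaluated with a common random
   injection on the pigeons of the whole constraint.  There every constraint is an average
   of constraints that hold pointwise: a placement puts the two pigeons of a clause into
   different holes.  Terms of width < n / (2 log n) <= n/4 leave room for those two pigeons. *)

section \<open>Uniformly random injections\<close>

definition injections :: "'a set \<Rightarrow> 'b set \<Rightarrow> ('a \<Rightarrow> 'b) set" where
  "injections A B = {f \<in> A \<rightarrow>\<^sub>E B. inj_on f A}"

definition mean_injections :: "'a set \<Rightarrow> 'b set \<Rightarrow> (('a \<Rightarrow> 'b) \<Rightarrow> real) \<Rightarrow> real" where
  "mean_injections A B g = (\<Sum>f\<in>injections A B. g f) / real (card (injections A B))"

lemma finite_injections: "finite A \<Longrightarrow> finite B \<Longrightarrow> finite (injections A B)"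
  unfolding injections_def by (rule finite_subset[of _ "A \<rightarrow>\<^sub>E B"]) (auto intro: finite_PiE)

lemma card_injections:
  "finite A \<Longrightarrow> finite B \<Longrightarrow> card (injections A B) = (\<Prod>k<card A. card B - k)"
  unfolding injections_def using card_inj_on_subset_funcset[of A B A]
  by (simp add: atLeast0LessThan)

lemma card_injections_pos:
  "finite A \<Longrightarrow> finite B \<Longrightarrow> card A \<le> card B \<Longrightarrow> 0 < card (injections A B)"
  by (simp add: card_injections)

lemma injections_empty: "injections {} B = {\<lambda>_. undefined}"
  unfolding injections_def by auto

lemma restrict_injections: "Q \<subseteq> P \<Longrightarrow> f \<in> injections P B \<Longrightarrow> restrict f Q \<in> injections Q B"
  unfolding injections_def by (auto simp: inj_on_def PiE_iff)

lemma restrict_Diff_injections: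
  assumes "Q \<subseteq> P" "f \<in> injections P B"
  shows "restrict f (P - Q) \<in> injections (P - Q) (B - f ` Q)"
proof -
  have "f ` (P - Q) \<inter> f ` Q = {}"
    using assms by (auto simp: injections_def inj_on_def)
  then show ?thesis
    using assms(2) by (auto simp: injections_def inj_on_def)
qed

lemma merge_injections:
  assumes "Q \<subseteq> P" and y: "y \<in> injections Q B" and z: "z \<in> injections (P - Q) (B - y ` Q)"
  shows "(\<lambda>i. if i \<in> Q then y i else z i) \<in> injections P B"
proof -
  have y': "y \<in> Q \<rightarrow>\<^sub>E B" "inj_on y Q" and z': "z \<in> (P - Q) \<rightarrow>\<^sub>E (B - y ` Q)" "inj_on z (P - Q)"
    using y z by (simp_all add: injections_def)
  let ?f = "\<lambda>i. if i \<in> Q then y i else z i"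
  have "?f \<in> P \<rightarrow>\<^sub>E B"
  proof (rule PiE_I)
    show "?f i \<in> B" if "i \<in> P" for i
      using that z'(1) y'(1) by (auto dest: PiE_mem)
    show "?f i = undefined" if "i \<notin> P" for i
      using that z'(1) \<open>Q \<subseteq> P\<close> by (auto intro: PiE_arb)
  qed
  moreover have "inj_on ?f P"
  proof (rule inj_onI)
    fix i i' assume "i \<in> P" "i' \<in> P" and eq: "?f i = ?f i'"
    have fresh: "z k \<noteq> y q" if "k \<in> P - Q" "q \<in> Q" for k q
      using that z'(1) by (auto dest: PiE_mem)
    show "i = i'"
      using eq fresh fresh[symmetric] \<open>i \<in> P\<close> \<open>i' \<in> P\<close>
      by (cases "i \<in> Q"; cases "i' \<in> Q")
        (simp_all add: inj_on_eq_iff[OF y'(2)] inj_on_eq_iff[OF z'(2)])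
  qed
  ultimately show ?thesis
    by (simp add: injections_def)
qed

lemma injections_fiber_bij:
  assumes "Q \<subseteq> P" and y: "y \<in> injections Q B"
  shows "bij_betw (\<lambda>f. restrict f (P - Q))
           {f \<in> injections P B. restrict f Q = y} (injections (P - Q) (B - y ` Q))"
proof (rule bij_betw_byWitness[where f' = "\<lambda>z i. if i \<in> Q then y i else z i"])
  show "\<forall>f\<in>{f \<in> injections P B. restrict f Q = y}.
          (\<lambda>i. if i \<in> Q then y i else restrict f (P - Q) i) = f"
    using \<open>Q \<subseteq> P\<close> by (auto simp: injections_def PiE_iff extensional_def fun_eq_iff)
  show "\<forall>z\<in>injections (P - Q) (B - y ` Q). restrict (\<lambda>i. if i \<in> Q then y i else z i) (P - Q) = z"
    by (auto simp: injections_def PiE_iff extensional_def fun_eq_iff)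
  show "(\<lambda>f. restrict f (P - Q)) ` {f \<in> injections P B. restrict f Q = y}
          \<subseteq> injections (P - Q) (B - y ` Q)"
    using restrict_Diff_injections[OF assms(1)] by auto
  show "(\<lambda>z i. if i \<in> Q then y i else z i) ` injections (P - Q) (B - y ` Q)
          \<subseteq> {f \<in> injections P B. restrict f Q = y}"
    using merge_injections[OF assms] y by (auto simp: injections_def PiE_iff extensional_def)
qed

lemma sum_injections_restrict:
  assumes "finite P" "finite B" "Q \<subseteq> P"
  shows "(\<Sum>f\<in>injections P B. g (restrict f Q))
           = real (\<Prod>k<card (P - Q). card B - card Q - k) * (\<Sum>y\<in>injections Q B. g y)"
proof -
  have fiber: "card {f \<in> injections P B. restrict f Q = y} = (\<Prod>k<card (P - Q). card B - card Q - k)"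
    if y: "y \<in> injections Q B" for y
  proof -
    have "y ` Q \<subseteq> B" "card (y ` Q) = card Q"
      using y by (auto simp: injections_def card_image)
    then have "card (B - y ` Q) = card B - card Q"
      using assms(2) by (simp add: card_Diff_subset finite_subset)
    moreover have "finite (P - Q)"
      using assms(1) by simp
    ultimately show ?thesis
      using bij_betw_same_card[OF injections_fiber_bij[OF assms(3) y]] assms(2)
      by (simp add: card_injections)
  qed
  have "(\<Sum>f\<in>injections P B. g (restrict f Q))
          = (\<Sum>y\<in>injections Q B. \<Sum>f\<in>{f \<in> injections P B. restrict f Q = y}. g (restrict f Q))"
    using assms finite_subset[OF assms(3,1)]
    by (intro sum.group[symmetric]) (auto simp: finite_injections restrict_injections)
  also have "\<dots> = (\<Sum>y\<in>injections Q B. real (card {f \<in> injections P B. restrict f Q = y}) * g y)"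
    by (intro sum.cong) auto
  also have "\<dots> = (\<Sum>y\<in>injections Q B. real (\<Prod>k<card (P - Q). card B - card Q - k) * g y)"
    by (intro sum.cong) (simp_all add: fiber)
  finally show ?thesis
    by (simp add: sum_distrib_left)
qed

lemma mean_injections_restrict:
  assumes "finite P" "finite B" "Q \<subseteq> P" "card P \<le> card B"
    and local: "\<And>f f'. (\<forall>i\<in>Q. f i = f' i) \<Longrightarrow> g f = g f'"
  shows "mean_injections P B g = mean_injections Q B g"
proof -
  define c where "c = real (\<Prod>k<card (P - Q). card B - card Q - k)"
  have sums: "(\<Sum>f\<in>injections P B. h (restrict f Q)) = c * (\<Sum>y\<in>injections Q B. h y)" for h
    unfolding c_def using assms(1-3) by (rule sum_injections_restrict)
  have g: "g f = g (restrict f Q)" for f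
    by (rule local) simp
  have card_P: "real (card (injections P B)) = c * real (card (injections Q B))"
    using sums[of "\<lambda>_. 1"] by simp
  moreover have "0 < card (injections P B)"
    using assms by (simp add: card_injections_pos)
  ultimately have "c \<noteq> 0"
    by auto
  moreover have "(\<Sum>f\<in>injections P B. g f) = c * (\<Sum>y\<in>injections Q B. g y)"
    unfolding sums[symmetric] by (rule sum.cong[OF refl], rule g)
  ultimately show ?thesis
    by (simp add: mean_injections_def card_P)
qed

lemma pigeons_of_eq_image: "pigeons_of D = (\<lambda>l. fst (fst l)) ` D"
  unfolding pigeons_of_def by force

lemma pigeons_of_insert [simp]: "pigeons_of (insert l D) = insert (fst (fst l)) (pigeons_of D)"
  by (simp add: pigeons_of_eq_image)

lemma finite_pigeons_of: "finite D \<Longrightarrow> finite (pigeons_of D)"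
  by (simp add: pigeons_of_eq_image)

lemma restr_clauseE:
  assumes "C \<in> restr_clauses m r \<rho>"
  obtains a i i' where "C = {l \<in> php_clause r a i i'. \<not> is_fixed \<rho> (fst l)}" "i \<noteq> i'"
    "\<And>l. l \<in> php_clause r a i i' \<Longrightarrow> \<not> lit_true \<rho> l"
  using assms unfolding restr_clauses_def php_clauses_def by blast

lemma finite_php_clause: "finite (php_clause r a i i')"
proof -
  have "php_clause r a i i'
          = (\<lambda>j. ((i, j), \<not> hole_bit a j)) ` {..<r} \<union> (\<lambda>j. ((i', j), \<not> hole_bit a j)) ` {..<r}"
    unfolding php_clause_def by auto
  then show ?thesis
    by simp
qed

lemma pigeons_of_php_subclause: "pigeons_of {l \<in> php_clause r a i i'. P l} \<subseteq> {i, i'}"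
  unfolding pigeons_of_def php_clause_def by auto

lemma finite_restr_clause: "C \<in> restr_clauses m r \<rho> \<Longrightarrow> finite C"
  by (erule restr_clauseE) (simp add: finite_php_clause)

lemma card_pigeons_of_restr_clause: "C \<in> restr_clauses m r \<rho> \<Longrightarrow> card (pigeons_of C) \<le> 2"
proof (erule restr_clauseE)
  fix a i i' assume C: "C = {l \<in> php_clause r a i i'. \<not> is_fixed \<rho> (fst l)}"
  have "pigeons_of C \<subseteq> {i, i'}"
    unfolding C by (rule pigeons_of_php_subclause)
  then have "card (pigeons_of C) \<le> card {i, i'}"
    by (simp add: card_mono)
  moreover have "card {i, i'} \<le> 2"
    by (simp add: card_insert_if)
  ultimately show ?thesis
    by linarith
qed

lemma pigeons_of_restr_clause:
  assumes "2 \<le> r"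
  shows "pigeons_of {l \<in> php_clause r a i i'. \<not> is_fixed \<rho> (fst l)} = {i, i'}"
proof
  show "pigeons_of {l \<in> php_clause r a i i'. \<not> is_fixed \<rho> (fst l)} \<subseteq> {i, i'}"
    by (rule pigeons_of_php_subclause)
  show "{i, i'} \<subseteq> pigeons_of {l \<in> php_clause r a i i'. \<not> is_fixed \<rho> (fst l)}"
  proof
    fix k assume k: "k \<in> {i, i'}"
    define j :: nat where "j = (if fst (\<rho> k) = 0 then 1 else 0)"
    have "j < r" "fst (\<rho> k) \<noteq> j"
      using assms by (auto simp: j_def)
    then have "((k, j), \<not> hole_bit a j) \<in> {l \<in> php_clause r a i i'. \<not> is_fixed \<rho> (fst l)}"
      using k by (auto simp: php_clause_def is_fixed_def)
    then show "k \<in> pigeons_of {l \<in> php_clause r a i i'. \<not> is_fixed \<rho> (fst l)}"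
      by (force simp: pigeons_of_def)
  qed
qed

definition sa_pigeons :: "sa_constr \<Rightarrow> nat set" where
  "sa_pigeons c = (\<Union>T\<in>sa_terms c. pigeons_of T)"

lemma finite_sa_pigeons:
  assumes "sa_valid m r \<rho> c"
  shows "finite (sa_pigeons c)"
proof -
  have "finite (sa_terms c) \<and> (\<forall>T\<in>sa_terms c. finite T)"
  proof (cases c)
    case (Clause_lift C D)
    then show ?thesis
      using assms finite_restr_clause[of C m r \<rho>] by (simp add: conj_ok_def)
  qed (use assms in \<open>simp_all add: conj_ok_def\<close>)
  then show ?thesis
    by (auto simp: sa_pigeons_def finite_pigeons_of)
qed

lemma card_sa_pigeons:
  assumes "sa_valid m r \<rho> c" and narrow: "\<And>T. T \<in> sa_terms c \<Longrightarrow> card (pigeons_of T) + 2 \<le> N"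
  shows "card (sa_pigeons c) \<le> N"
proof (cases c)
  case (Clause_lift C D)
  then have C: "C \<in> restr_clauses m r \<rho>" and "finite D"
    using assms(1) by (simp_all add: conj_ok_def)
  have "finite (pigeons_of D \<union> pigeons_of C)"
    using \<open>finite D\<close> finite_restr_clause[OF C] by (simp add: finite_pigeons_of)
  moreover have "sa_pigeons c \<subseteq> pigeons_of D \<union> pigeons_of C"
    using Clause_lift by (auto simp: sa_pigeons_def pigeons_of_eq_image)
  ultimately have "card (sa_pigeons c) \<le> card (pigeons_of D \<union> pigeons_of C)"
    by (rule card_mono)
  also have "\<dots> \<le> card (pigeons_of D) + card (pigeons_of C)"
    by (rule card_Un_le)
  also have "\<dots> \<le> N"
    using narrow[of D] card_pigeons_of_restr_clause[OF C] Clause_lift by simp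
  finally show ?thesis .
next
  case (Neg_lift v D)
  then have "sa_pigeons c = pigeons_of (insert (v, True) D)"
    by (auto simp: sa_pigeons_def)
  then show ?thesis
    using narrow[of "insert (v, True) D"] Neg_lift by simp
next
  case (Lower_lift l D)
  then show ?thesis
    using narrow[of "insert l D"] by (simp add: sa_pigeons_def)
next
  case (Upper_lift l D)
  then have "sa_pigeons c = pigeons_of (insert l D)"
    by (auto simp: sa_pigeons_def)
  then show ?thesis
    using narrow[of "insert l D"] Upper_lift by simp
qed

section \<open>Placements consistent with a restriction\<close>

lemma hole_bit_iff_bit: "hole_bit a j \<longleftrightarrow> bit a j"
  by (simp add: hole_bit_def bit_iff_odd)

lemma hole_bits_inj:
  assumes "a < 2 ^ r" "b < 2 ^ r" "\<forall>j<r. hole_bit a j = hole_bit b j"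
  shows "a = b"
proof -
  have "take_bit r a = take_bit r b"
    using assms(3) by (intro bit_eqI) (auto simp: bit_take_bit_iff hole_bit_iff_bit)
  then show ?thesis
    using assms(1,2) by (simp add: take_bit_nat_eq_self)
qed

(* Pigeon i sits in hole x i, or in its bitwise complement on r bits when x i disagrees with
   the bit fixed by \<rho>; placed_bit gives bit j of that hole. *)
definition placed_bit :: "(nat \<Rightarrow> nat \<times> bool) \<Rightarrow> (nat \<Rightarrow> nat) \<Rightarrow> nat \<Rightarrow> nat \<Rightarrow> bool" where
  "placed_bit \<rho> x i j \<longleftrightarrow> hole_bit (x i) j \<noteq> (hole_bit (x i) (fst (\<rho> i)) \<noteq> snd (\<rho> i))"

definition lit_placed :: "(nat \<Rightarrow> nat \<times> bool) \<Rightarrow> (nat \<Rightarrow> nat) \<Rightarrow> lit \<Rightarrow> bool" where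
  "lit_placed \<rho> x l \<longleftrightarrow> placed_bit \<rho> x (fst (fst l)) (snd (fst l)) = snd l"

lemma placed_bit_fixed: "placed_bit \<rho> x i (fst (\<rho> i)) = snd (\<rho> i)"
  by (auto simp: placed_bit_def)

lemma placed_bits_inj:
  assumes "1 \<le> r" "x i < 2 ^ (r - 1)" "x i' < 2 ^ (r - 1)"
    and same: "\<forall>j<r. placed_bit \<rho> x i j = placed_bit \<rho> x i' j"
  shows "x i = x i'"
proof -
  have "\<not> hole_bit (x i) (r - 1)" "\<not> hole_bit (x i') (r - 1)"
    using assms(2,3) by (simp_all add: hole_bit_def)
  moreover have "placed_bit \<rho> x i (r - 1) = placed_bit \<rho> x i' (r - 1)"
    using same assms(1) by simp
  ultimately have "(hole_bit (x i) (fst (\<rho> i)) \<noteq> snd (\<rho> i))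
                     = (hole_bit (x i') (fst (\<rho> i')) \<noteq> snd (\<rho> i'))"
    by (simp add: placed_bit_def)
  then have "\<forall>j<r. hole_bit (x i) j = hole_bit (x i') j"
    using same by (auto simp: placed_bit_def)
  moreover have "x i < 2 ^ r" "x i' < 2 ^ r"
    using assms(2,3) by (auto intro: order_less_le_trans)
  ultimately show ?thesis
    by (intro hole_bits_inj) auto
qed

lemma placed_conj_cong:
  assumes "\<forall>i\<in>pigeons_of D. x i = x' i"
  shows "(\<forall>l\<in>D. lit_placed \<rho> x l) \<longleftrightarrow> (\<forall>l\<in>D. lit_placed \<rho> x' l)"
proof -
  have "x (fst (fst l)) = x' (fst (fst l))" if "l \<in> D" for l
    using assms that by (simp add: pigeons_of_eq_image)
  then show ?thesis
    by (simp add: lit_placed_def placed_bit_def)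
qed

lemma restr_clause_placed:
  assumes "2 \<le> r" and C: "C \<in> restr_clauses m r \<rho>"
    and inj: "inj_on x (pigeons_of C)" and holes: "x ` pigeons_of C \<subseteq> {..<2 ^ (r - 1)}"
  shows "\<exists>l\<in>C. lit_placed \<rho> x l"
proof -
  obtain a i i' where C_eq: "C = {l \<in> php_clause r a i i'. \<not> is_fixed \<rho> (fst l)}" and "i \<noteq> i'"
    and unsat: "\<And>l. l \<in> php_clause r a i i' \<Longrightarrow> \<not> lit_true \<rho> l"
    using C by (elim restr_clauseE) blast
  have "pigeons_of C = {i, i'}"
    unfolding C_eq using assms(1) by (rule pigeons_of_restr_clause)
  then have x: "x i \<noteq> x i'" "x i < 2 ^ (r - 1)" "x i' < 2 ^ (r - 1)"
    using inj holes \<open>i \<noteq> i'\<close> by (auto dest: inj_onD)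
  show ?thesis
  proof (rule ccontr)
    assume none: "\<not> (\<exists>l\<in>C. lit_placed \<rho> x l)"
    have "placed_bit \<rho> x k j = hole_bit a j" if "k \<in> {i, i'}" "j < r" for k j
    proof -
      have l: "((k, j), \<not> hole_bit a j) \<in> php_clause r a i i'"
        using that unfolding php_clause_def by auto
      show ?thesis
      proof (cases "fst (\<rho> k) = j")
        case True
        then show ?thesis
          using unsat[OF l] placed_bit_fixed[of \<rho> x k] by (auto simp: lit_true_def is_fixed_def)
      next
        case False
        then have "((k, j), \<not> hole_bit a j) \<in> C"
          using l by (simp add: C_eq is_fixed_def)
        then show ?thesis
          using none by (auto simp: lit_placed_def)
      qed
    qed
    then have "x i = x i'"
      using assms(1) x(2,3) by (intro placed_bits_inj[where \<rho> = \<rho>]) auto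
    with x(1) show False
      by simp
  qed
qed

lemma sa_holds_placement:
  assumes "2 \<le> r" "sa_valid m r \<rho> c" "sa_pigeons c \<subseteq> P"
    and inj: "inj_on x P" and holes: "x ` P \<subseteq> {..<2 ^ (r - 1)}"
  shows "sa_holds (\<lambda>D. of_bool (\<forall>l\<in>D. lit_placed \<rho> x l)) c"
proof (cases c)
  case (Clause_lift C D)
  show ?thesis
  proof (cases "\<forall>l\<in>D. lit_placed \<rho> x l")
    case True
    have C: "C \<in> restr_clauses m r \<rho>"
      using assms(2) Clause_lift by simp
    have "pigeons_of C \<subseteq> P"
      using assms(3) Clause_lift by (auto simp: sa_pigeons_def pigeons_of_eq_image)
    then obtain l where l: "l \<in> C" "lit_placed \<rho> x l"
      using restr_clause_placed[OF assms(1) C] inj_on_subset[OF inj] holes by blast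
    have "(1 :: real) = of_bool (\<forall>l'\<in>insert l D. lit_placed \<rho> x l')"
      using l True by simp
    also have "\<dots> \<le> (\<Sum>l\<in>C. of_bool (\<forall>l'\<in>insert l D. lit_placed \<rho> x l'))"
      by (rule member_le_sum) (use l finite_restr_clause[OF C] in auto)
    finally have "1 \<le> (\<Sum>l\<in>C. of_bool (\<forall>l'\<in>insert l D. lit_placed \<rho> x l') :: real)" .
    then show ?thesis
      using Clause_lift True by simp
  qed (use Clause_lift in \<open>auto simp: sum_nonneg\<close>)
qed (auto simp: lit_placed_def)

section \<open>The Sherali-Adams solution\<close>

lemma sa_holds_cong:
  "(\<And>T. T \<in> sa_terms c \<Longrightarrow> Z T = Z' T) \<Longrightarrow> sa_holds Z c = sa_holds Z' c"
  by (cases c) (simp_all cong: sum.cong)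

lemma sa_holds_mean:
  assumes "finite X" "X \<noteq> {}" "\<And>x. x \<in> X \<Longrightarrow> sa_holds (Z x) c"
  shows "sa_holds (\<lambda>D. (\<Sum>x\<in>X. Z x D) / real (card X)) c"
proof (cases c)
  case (Clause_lift C D)
  have "(\<Sum>x\<in>X. Z x D) \<le> (\<Sum>x\<in>X. \<Sum>l\<in>C. Z x (insert l D))"
    using assms(3) Clause_lift by (intro sum_mono) simp
  then show ?thesis
    using Clause_lift
    by (simp add: sum_divide_distrib[symmetric] sum.swap[of _ C] divide_right_mono)
next
  case (Neg_lift v D)
  then show ?thesis
    using assms(3) by (simp add: sum.distrib[symmetric] add_divide_distrib[symmetric] cong: sum.cong)
next
  case (Lower_lift l D)
  then show ?thesis
    using assms(3) by (simp add: sum_nonneg)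
next
  case (Upper_lift l D)
  then show ?thesis
    using assms(3) by (simp add: sum_mono divide_right_mono)
qed

definition sa_solution :: "nat \<Rightarrow> (nat \<Rightarrow> nat \<times> bool) \<Rightarrow> lit set \<Rightarrow> real" where
  "sa_solution r \<rho> D =
     mean_injections (pigeons_of D) {..<2 ^ (r - 1)} (\<lambda>x. of_bool (\<forall>l\<in>D. lit_placed \<rho> x l))"

lemma sa_solution_empty: "sa_solution r \<rho> {} = 1"
  by (simp add: sa_solution_def mean_injections_def injections_empty pigeons_of_def)

lemma sa_holds_sa_solution:
  assumes "2 \<le> r" "sa_valid m r \<rho> c" "card (sa_pigeons c) \<le> 2 ^ (r - 1)"
  shows "sa_holds (sa_solution r \<rho>) c"
proof -
  define P where "P = sa_pigeons c"
  define H :: "nat set" where "H = {..<2 ^ (r - 1)}"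
  define Z :: "(nat \<Rightarrow> nat) \<Rightarrow> lit set \<Rightarrow> real" where "Z x D = of_bool (\<forall>l\<in>D. lit_placed \<rho> x l)" for x D
  have P: "finite P" "card P \<le> card H"
    using assms(2,3) finite_sa_pigeons by (simp_all add: P_def H_def)
  have marginal: "sa_solution r \<rho> T = mean_injections P H (\<lambda>x. Z x T)" if "T \<in> sa_terms c" for T
    unfolding sa_solution_def H_def[symmetric] Z_def
  proof (rule mean_injections_restrict[symmetric])
    show "pigeons_of T \<subseteq> P"
      using that by (auto simp: P_def sa_pigeons_def)
    show "of_bool (\<forall>l\<in>T. lit_placed \<rho> f l) = (of_bool (\<forall>l\<in>T. lit_placed \<rho> f' l) :: real)"
      if "\<forall>i\<in>pigeons_of T. f i = f' i" for f f'
      using placed_conj_cong[OF that] by simp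
  qed (use P in \<open>simp_all add: H_def\<close>)
  have "sa_holds (\<lambda>T. (\<Sum>x\<in>injections P H. Z x T) / real (card (injections P H))) c"
  proof (rule sa_holds_mean)
    show "finite (injections P H)" "injections P H \<noteq> {}"
      using P card_injections_pos[of P H] by (auto simp: H_def finite_injections)
    show "sa_holds (Z x) c" if "x \<in> injections P H" for x
      unfolding Z_def
      by (rule sa_holds_placement[OF assms(1,2), of P]) (use that in \<open>auto simp: P_def H_def injections_def\<close>)
  qed
  then show ?thesis
    using sa_holds_cong[of c "sa_solution r \<rho>"] marginal by (simp add: mean_injections_def)
qed

lemma sa_refutation_wide_term:
  assumes "2 \<le> r" and refutation: "sa_refutation m r \<rho> S"
  shows "\<exists>c\<in>S. \<exists>T\<in>sa_terms c. 2 ^ (r - 1) < card (pigeons_of T) + 2"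
proof (rule ccontr)
  assume "\<not> ?thesis"
  then have narrow: "\<And>c T. c \<in> S \<Longrightarrow> T \<in> sa_terms c \<Longrightarrow> card (pigeons_of T) + 2 \<le> 2 ^ (r - 1)"
    by (auto simp: not_less)
  have "sa_holds (sa_solution r \<rho>) c" if "c \<in> S" for c
  proof -
    have valid: "sa_valid m r \<rho> c"
      using refutation that by (simp add: sa_refutation_def)
    then have "card (sa_pigeons c) \<le> 2 ^ (r - 1)"
      using narrow[OF that] by (rule card_sa_pigeons)
    then show ?thesis
      using sa_holds_sa_solution[OF assms(1) valid] by simp
  qed
  then show False
    using refutation sa_solution_empty unfolding sa_refutation_def by blast
qed

lemma narrow_width_bound:
  fixes k r :: nat
  assumes "2 \<le> r" "real k < real (2 ^ r) / (2 * log 2 (real (2 ^ r)))"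
  shows "k + 2 \<le> 2 ^ (r - 1)"
proof -
  have "log 2 (real (2 ^ r)) = real r"
    by simp
  moreover have "real (2 ^ r) / (2 * real r) \<le> real (2 ^ r) / 4"
    using assms(1) by (intro divide_left_mono) auto
  ultimately have "real (2 ^ r) / (2 * log 2 (real (2 ^ r))) \<le> real (2 ^ r) / 4"
    by simp
  then have "real (4 * k) < real (2 ^ r)"
    using assms(2) by simp
  then have "4 * k < 2 ^ r"
    by (simp only: of_nat_less_iff)
  moreover have "(2::nat) ^ r = 2 * 2 ^ (r - 1)"
    using assms(1) by (simp flip: power_Suc)
  moreover have "2 \<le> (2::nat) ^ (r - 1)"
    using power_increasing[of 1 "r - 1" "2::nat"] assms(1) by simp
  ultimately show ?thesis
    by linarith
qed

theorem lemma6: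
  fixes n m r :: nat
  assumes "n = 2 ^ r" and "2 \<le> r" and "m > n"
  shows "real (card {\<rho> \<in> restrictions m r.
            \<exists>S. sa_refutation m r \<rho> S \<and>
                (\<forall>c\<in>S. \<forall>T\<in>sa_terms c. real (card (pigeons_of T)) < real n / (2 * log 2 (real n)))})
         / real (card (restrictions m r))
       \<le> exp (- real n / (32 * (log 2 (real n))\<^sup>2))"
proof -
  have "\<not> (\<forall>c\<in>S. \<forall>T\<in>sa_terms c. real (card (pigeons_of T)) < real n / (2 * log 2 (real n)))"
    if refutation: "sa_refutation m r \<rho> S" for \<rho> S
  proof -
    obtain c T where "c \<in> S" "T \<in> sa_terms c" and wide: "2 ^ (r - 1) < card (pigeons_of T) + 2"
      using sa_refutation_wide_term[OF assms(2) refutation] by blast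
    moreover have "\<not> real (card (pigeons_of T)) < real n / (2 * log 2 (real n))"
      unfolding assms(1) using narrow_width_bound[OF assms(2)] wide by (meson leD)
    ultimately show ?thesis
      by blast
  qed
  then have no_narrow_refutation: "{\<rho> \<in> restrictions m r. \<exists>S. sa_refutation m r \<rho> S \<and>
      (\<forall>c\<in>S. \<forall>T\<in>sa_terms c. real (card (pigeons_of T)) < real n / (2 * log 2 (real n)))} = {}"
    by blast
  show ?thesis
    unfolding no_narrow_refutation by simp
qed

end
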